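(* For every nonnegative integer $l$ there exists a connected graph $G$ with $p(G)-k(G)+1=l$.
   Context: All graphs are finite and simple. For an acyclic digraph $D$, the competition graph $C(D)$ is the graph on $V(D)$ in which distinct $u,v$ are adjacent iff they have a common out-neighbor in $D$. The competition number $k(G)$ is the smallest $k\ge 0$ such that $G$ together with $k$ new isolated vertices is the competition graph of some acyclic digraph. The phylogeny graph $P(D)$ of an acyclic digraph $D$ is the graph on $V(D)$ in which distinct vertices $u,v$ are adjacent iff $(u,v)\in A(D)$, or $(v,u)\in A(D)$, or they have a common out-neighbor in $D$. A phylogeny digraph for a graph $G$ is an acyclic digraph $D$ such that $G$ is an induced subgraph of $P(D)$ and $D$ has no arc from a vertex of $V(D)\setminus V(G)$ to a vertex of $V(G)$. The phylogeny number $p(G)$ is the minimum of $|V(D)\setminus V(G)|$ over all phylogeny digraphs $D$ for $G$. *)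

theory Defs
  imports Main
begin

definition simple_graph :: "'a set \<Rightarrow> ('a \<times> 'a) set \<Rightarrow> bool" where
  "simple_graph V E \<longleftrightarrow> finite V \<and> E \<subseteq> V \<times> V \<and> sym E \<and> irrefl E"

definition connected_graph :: "'a set \<Rightarrow> ('a \<times> 'a) set \<Rightarrow> bool" where
  "connected_graph V E \<longleftrightarrow> V \<noteq> {} \<and> (\<forall>u\<in>V. \<forall>v\<in>V. (u, v) \<in> E\<^sup>*)"

definition acyclic_digraph :: "'a set \<Rightarrow> ('a \<times> 'a) set \<Rightarrow> bool" where
  "acyclic_digraph W A \<longleftrightarrow> finite W \<and> A \<subseteq> W \<times> W \<and> acyclic A"

definition competition_edges :: "'a set \<Rightarrow> ('a \<times> 'a) set \<Rightarrow> ('a \<times> 'a) set" where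
  "competition_edges W A =
     {(u, v). u \<in> W \<and> v \<in> W \<and> u \<noteq> v \<and> (\<exists>w. (u, w) \<in> A \<and> (v, w) \<in> A)}"

definition phylogeny_edges :: "'a set \<Rightarrow> ('a \<times> 'a) set \<Rightarrow> ('a \<times> 'a) set" where
  "phylogeny_edges W A =
     {(u, v). u \<in> W \<and> v \<in> W \<and> u \<noteq> v \<and>
        ((u, v) \<in> A \<or> (v, u) \<in> A \<or> (\<exists>w. (u, w) \<in> A \<and> (v, w) \<in> A))}"

definition competition_number :: "'a set \<Rightarrow> ('a \<times> 'a) set \<Rightarrow> nat" where
  "competition_number V E = (LEAST k. \<exists>I A. finite I \<and> card I = k \<and> I \<inter> V = {} \<and>
      acyclic_digraph (V \<union> I) A \<and> competition_edges (V \<union> I) A = E)"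

definition phylogeny_digraph :: "'a set \<Rightarrow> ('a \<times> 'a) set \<Rightarrow> 'a set \<Rightarrow> ('a \<times> 'a) set \<Rightarrow> bool" where
  "phylogeny_digraph V E W A \<longleftrightarrow> acyclic_digraph W A \<and> V \<subseteq> W \<and>
      (\<forall>u\<in>V. \<forall>v\<in>V. (u, v) \<in> E \<longleftrightarrow> (u, v) \<in> phylogeny_edges W A) \<and>
      (\<forall>x\<in>W - V. \<forall>y\<in>V. (x, y) \<notin> A)"

definition phylogeny_number :: "'a set \<Rightarrow> ('a \<times> 'a) set \<Rightarrow> nat" where
  "phylogeny_number V E = (LEAST n. \<exists>W A. phylogeny_digraph V E W A \<and> card (W - V) = n)"

end

theory Submission
  imports Defs
begin

text \<open>
  Take two non-adjacent hubs 0 and 1, \<open>n \<ge> 1\<close> spokes each adjacent to both hubs, and a clique of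
  \<open>2n\<close> core vertices all adjacent to hub 0. Every vertex has a neighbour, so the sink of an acyclic
  digraph forces \<open>k \<ge> 1\<close>; one extra vertex preyed on by hub 0 and the core, together with a separate
  core prey for each of the \<open>2n\<close> hub--spoke edges, shows \<open>k = 1\<close>.
  The \<open>2n\<close> hub--spoke edges lie in no triangle, so in a phylogeny digraph each of them is a whole
  closed in-neighbourhood \<open>N[w]\<close>, and distinct edges need distinct vertices \<open>w\<close>. Such a \<open>w\<close> is either
  new or an endpoint with an in-neighbour, which excludes a source among the \<open>n + 2\<close> endpoints;
  hence \<open>2n \<le> n + 1 + p\<close>, and a matching construction gives \<open>p = n - 1\<close>.
  Thus \<open>p - k + 1 = n - 1\<close> takes every value \<open>l\<close>.
\<close>

section \<open>Acyclic digraphs\<close>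

lemma acyclic_if_rank_increasing:
  fixes f :: "'a \<Rightarrow> nat"
  assumes "\<And>u v. (u, v) \<in> A \<Longrightarrow> f u < f v"
  shows "acyclic A"
proof -
  have "f x < f y" if "(x, y) \<in> A\<^sup>+" for x y
    using that by (induction rule: trancl.induct) (auto dest: assms)
  then show ?thesis
    by (auto simp: acyclic_def)
qed

lemma acyclic_digraph_has_source_in:
  assumes "acyclic_digraph W A" and "S \<subseteq> W" and "S \<noteq> {}"
  shows "\<exists>m\<in>S. \<forall>x\<in>S. (x, m) \<notin> A"
proof -
  have "finite W" "A \<subseteq> W \<times> W" "acyclic A"
    using assms(1) unfolding acyclic_digraph_def by auto
  then have "wf A"
    by (intro finite_acyclic_wf finite_subset[OF _ finite_cartesian_product])
  then show ?thesis
    using wfE_min' assms(3) by metis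
qed

lemma acyclic_digraph_has_sink:
  assumes "acyclic_digraph W A" and "W \<noteq> {}"
  shows "\<exists>v\<in>W. \<forall>w. (v, w) \<notin> A"
proof -
  have "acyclic_digraph W (A\<inverse>)"
    using assms(1) unfolding acyclic_digraph_def by auto
  from acyclic_digraph_has_source_in[OF this subset_refl assms(2)] obtain v
    where "v \<in> W" "\<forall>x\<in>W. (v, x) \<notin> A"
    by auto
  then show ?thesis
    using assms(1) unfolding acyclic_digraph_def by blast
qed

lemma competition_graph_has_isolated_vertex:
  assumes "acyclic_digraph W A" and "W \<noteq> {}"
  shows "\<exists>v\<in>W. \<forall>u. (v, u) \<notin> competition_edges W A"
  using acyclic_digraph_has_sink[OF assms] unfolding competition_edges_def by blast

lemma connected_graphI:
  assumes "r \<in> V" and "sym E" and "\<And>v. v \<in> V \<Longrightarrow> (v, r) \<in> E\<^sup>*"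
  shows "connected_graph V E"
  unfolding connected_graph_def
proof (intro conjI ballI)
  show "V \<noteq> {}"
    using assms(1) by blast
  fix u v
  assume "u \<in> V" "v \<in> V"
  then have "(u, r) \<in> E\<^sup>*" "(r, v) \<in> E\<^sup>*"
    using assms(2,3) sym_rtrancl[OF assms(2)] by (auto dest: symD)
  then show "(u, v) \<in> E\<^sup>*"
    by (rule rtrancl_trans)
qed

section \<open>Bounds on the competition and phylogeny numbers\<close>

lemma competition_number_le:
  assumes "finite I" "I \<inter> V = {}" "acyclic_digraph (V \<union> I) A" "competition_edges (V \<union> I) A = E"
  shows "competition_number V E \<le> card I"
  unfolding competition_number_def by (rule Least_le) (use assms in blast)

lemma competition_number_pos:
  assumes "finite I" "I \<inter> V = {}" "acyclic_digraph (V \<union> I) A" "competition_edges (V \<union> I) A = E"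
    and "V \<noteq> {}" and "\<And>v. v \<in> V \<Longrightarrow> \<exists>u. (v, u) \<in> E"
  shows "0 < competition_number V E"
proof -
  let ?P = "\<lambda>k. \<exists>I A. finite I \<and> card I = k \<and> I \<inter> V = {} \<and>
      acyclic_digraph (V \<union> I) A \<and> competition_edges (V \<union> I) A = E"
  obtain I' A' where I': "finite I'" "card I' = competition_number V E"
    and D': "acyclic_digraph (V \<union> I') A'" "competition_edges (V \<union> I') A' = E"
    using LeastI_ex[of ?P] assms(1-4) unfolding competition_number_def by blast
  show ?thesis
  proof (rule ccontr)
    assume "\<not> 0 < competition_number V E"
    then have "I' = {}"
      using I' by simp
    then obtain v where "v \<in> V" "\<forall>u. (v, u) \<notin> E"
      using competition_graph_has_isolated_vertex[of V A'] D' assms(5) by auto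
    then show False
      using assms(6) by blast
  qed
qed

lemma phylogeny_number_le:
  "phylogeny_digraph V E W A \<Longrightarrow> phylogeny_number V E \<le> card (W - V)"
  unfolding phylogeny_number_def by (rule Least_le) blast

definition clique :: "'a set \<Rightarrow> ('a \<times> 'a) set \<Rightarrow> 'a set \<Rightarrow> bool" where
  "clique V E K \<longleftrightarrow> K \<subseteq> V \<and> (\<forall>x\<in>K. \<forall>y\<in>K. x \<noteq> y \<longrightarrow> (x, y) \<in> E)"

definition closed_in_neighbourhood :: "'a set \<Rightarrow> ('a \<times> 'a) set \<Rightarrow> 'a \<Rightarrow> 'a set" where
  "closed_in_neighbourhood V A w = {x \<in> V. (x, w) \<in> A \<or> x = w}"

lemma phylogeny_digraph_edge_iff:
  assumes "phylogeny_digraph V E W A" and "u \<in> V" "v \<in> V"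
  shows "(u, v) \<in> E \<longleftrightarrow> (u, v) \<in> phylogeny_edges W A"
  using assms unfolding phylogeny_digraph_def by blast

lemma clique_closed_in_neighbourhood:
  assumes "phylogeny_digraph V E W A"
  shows "clique V E (closed_in_neighbourhood V A w)"
  unfolding clique_def
proof (intro conjI ballI impI)
  show "closed_in_neighbourhood V A w \<subseteq> V"
    unfolding closed_in_neighbourhood_def by blast
  fix x y
  assume xy: "x \<in> closed_in_neighbourhood V A w" "y \<in> closed_in_neighbourhood V A w" "x \<noteq> y"
  have "V \<subseteq> W"
    using assms unfolding phylogeny_digraph_def by blast
  with xy have "(x, y) \<in> phylogeny_edges W A"
    unfolding closed_in_neighbourhood_def phylogeny_edges_def by auto
  then show "(x, y) \<in> E"
    using phylogeny_digraph_edge_iff[OF assms] xy(1,2)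
    unfolding closed_in_neighbourhood_def by blast
qed

lemma phylogeny_edge_in_closed_in_neighbourhood:
  assumes "phylogeny_digraph V E W A" and "u \<in> V" "v \<in> V" "(u, v) \<in> E"
  shows "\<exists>w\<in>W. {u, v} \<subseteq> closed_in_neighbourhood V A w"
proof -
  have "V \<subseteq> W" "A \<subseteq> W \<times> W"
    using assms(1) unfolding phylogeny_digraph_def acyclic_digraph_def by blast+
  moreover have "(u, v) \<in> phylogeny_edges W A"
    using phylogeny_digraph_edge_iff[OF assms(1-3)] assms(4) by blast
  ultimately show ?thesis
    using assms(2,3) unfolding phylogeny_edges_def closed_in_neighbourhood_def by auto
qed

lemma card_maximal_clique_edges_bound:
  assumes D: "phylogeny_digraph V E W A" and "F \<noteq> {}"
    and edge: "\<And>e. e \<in> F \<Longrightarrow> \<exists>u v. e = {u, v} \<and> u \<in> V \<and> v \<in> V \<and> (u, v) \<in> E"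
    and maximal: "\<And>e K. e \<in> F \<Longrightarrow> clique V E K \<Longrightarrow> e \<subseteq> K \<Longrightarrow> K = e"
  shows "card F < card (\<Union>F) + card (W - V)"
proof -
  let ?N = "closed_in_neighbourhood V A"
  have W: "acyclic_digraph W A" "finite W" "V \<subseteq> W"
    using D unfolding phylogeny_digraph_def acyclic_digraph_def by blast+
  have "\<Union>F \<subseteq> V"
    using edge by blast
  then have UF: "\<Union>F \<subseteq> W"
    using W(3) by (rule subset_trans)
  then have fin: "finite (\<Union>F)"
    using W(2) by (rule finite_subset)
  have "\<Union>F \<noteq> {}"
    using edge \<open>F \<noteq> {}\<close> by blast
  with acyclic_digraph_has_source_in[OF W(1) UF] obtain m
    where m: "m \<in> \<Union>F" "\<forall>x\<in>\<Union>F. (x, m) \<notin> A"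
    by blast
  have "\<exists>w\<in>W. ?N w = e" if e: "e \<in> F" for e
  proof -
    obtain u v where "e = {u, v}" "u \<in> V" "v \<in> V" "(u, v) \<in> E"
      using edge[OF e] by blast
    then obtain w where "w \<in> W" "e \<subseteq> ?N w"
      using phylogeny_edge_in_closed_in_neighbourhood[OF D] by blast
    then show ?thesis
      using maximal[OF e clique_closed_in_neighbourhood[OF D]] by blast
  qed
  then obtain prey where prey: "\<And>e. e \<in> F \<Longrightarrow> prey e \<in> W \<and> ?N (prey e) = e"
    by metis
  have "inj_on prey F"
    by (rule inj_onI) (metis prey)
  moreover have "prey ` F \<subseteq> (\<Union>F - {m}) \<union> (W - V)"
  proof
    fix w
    assume "w \<in> prey ` F"
    then obtain e where e: "e \<in> F" "w \<in> W" "?N w = e"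
      using prey by blast
    obtain u v where uv: "e = {u, v}" "(u, v) \<in> E" "u \<in> V" "v \<in> V"
      using edge[OF e(1)] by blast
    have "u \<noteq> v"
      using phylogeny_digraph_edge_iff[OF D uv(3,4)] uv(2) unfolding phylogeny_edges_def by simp
    show "w \<in> (\<Union>F - {m}) \<union> (W - V)"
    proof (cases "w \<in> V")
      case True
      then have "w \<in> e"
        using e(3) unfolding closed_in_neighbourhood_def by auto
      then obtain x where "x \<in> e" "x \<noteq> w"
        using uv(1) \<open>u \<noteq> v\<close> by blast
      then have "(x, w) \<in> A"
        using e(3) unfolding closed_in_neighbourhood_def by auto
      then show ?thesis
        using m(2) \<open>x \<in> e\<close> \<open>w \<in> e\<close> e(1) by blast
    qed (use e(2) in blast)
  qed
  ultimately have "card F \<le> card ((\<Union>F - {m}) \<union> (W - V))"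
    by (rule card_inj_on_le) (use fin W(2) in blast)
  also have "\<dots> \<le> card (\<Union>F - {m}) + card (W - V)"
    by (rule card_Un_le)
  also have "card (\<Union>F - {m}) < card (\<Union>F)"
    by (rule card_Diff1_less[OF fin m(1)])
  finally show ?thesis
    by linarith
qed

lemma phylogeny_number_lower_bound:
  assumes "phylogeny_digraph V E W A" and "F \<noteq> {}"
    and "\<And>e. e \<in> F \<Longrightarrow> \<exists>u v. e = {u, v} \<and> u \<in> V \<and> v \<in> V \<and> (u, v) \<in> E"
    and "\<And>e K. e \<in> F \<Longrightarrow> clique V E K \<Longrightarrow> e \<subseteq> K \<Longrightarrow> K = e"
  shows "card F < card (\<Union>F) + phylogeny_number V E"
proof -
  obtain W' A' where "phylogeny_digraph V E W' A'" "card (W' - V) = phylogeny_number V E"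
    using LeastI_ex[of "\<lambda>n. \<exists>W A. phylogeny_digraph V E W A \<and> card (W - V) = n"] assms(1)
    unfolding phylogeny_number_def by blast
  from card_maximal_clique_edges_bound[OF this(1) assms(2-4)] this(2) show ?thesis
    by simp
qed

lemma card_doubletons:
  assumes "finite H" "finite Y" "H \<inter> Y = {}"
  shows "card ((\<lambda>(h, y). {h, y}) ` (H \<times> Y)) = card H * card Y"
proof -
  have "inj_on (\<lambda>(h, y). {h, y}) (H \<times> Y)"
    using assms(3) by (intro inj_onI) (auto simp: doubleton_eq_iff)
  then show ?thesis
    using assms(1,2) by (simp add: card_image card_cartesian_product)
qed

lemma Union_doubletons:
  assumes "H \<noteq> {}" "Y \<noteq> {}"
  shows "\<Union>((\<lambda>(h, y). {h, y}) ` (H \<times> Y)) = H \<union> Y"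
  using assms by blast

lemma doubletonsE:
  assumes "e \<in> (\<lambda>(h, y). {h, y}) ` (H \<times> Y)"
  obtains h y where "e = {h, y}" "h \<in> H" "y \<in> Y"
  using assms that by auto

section \<open>The hub graph\<close>

definition spoke :: "nat \<Rightarrow> nat \<Rightarrow> bool" where
  "spoke n y \<longleftrightarrow> 2 \<le> y \<and> y < 2 + n"

definition core :: "nat \<Rightarrow> nat \<Rightarrow> bool" where
  "core n x \<longleftrightarrow> 2 + n \<le> x \<and> x < 2 + 3 * n"

definition hub_adj :: "nat \<Rightarrow> nat \<Rightarrow> nat \<Rightarrow> bool" where
  "hub_adj n u v \<longleftrightarrow>
     (u \<le> 1 \<and> spoke n v) \<or> (v \<le> 1 \<and> spoke n u) \<or> (u = 0 \<and> core n v) \<or> (v = 0 \<and> core n u) \<or>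
     (core n u \<and> core n v \<and> u \<noteq> v)"

definition hub_vertices :: "nat \<Rightarrow> nat set" where
  "hub_vertices n = {0..<2 + 3 * n}"

definition hub_edges :: "nat \<Rightarrow> (nat \<times> nat) set" where
  "hub_edges n = {(u, v). hub_adj n u v}"

lemma hub_adj_sym: "hub_adj n u v \<Longrightarrow> hub_adj n v u"
  unfolding hub_adj_def by auto

lemma hub_adj_vertices: "hub_adj n u v \<Longrightarrow> u \<in> hub_vertices n \<and> v \<in> hub_vertices n \<and> u \<noteq> v"
  unfolding hub_adj_def hub_vertices_def spoke_def core_def by auto

lemma simple_graph_hub: "simple_graph (hub_vertices n) (hub_edges n)"
  using hub_adj_vertices hub_adj_sym
  unfolding simple_graph_def hub_edges_def sym_def irrefl_def hub_vertices_def by auto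

lemma connected_graph_hub:
  assumes "1 \<le> n"
  shows "connected_graph (hub_vertices n) (hub_edges n)"
proof (rule connected_graphI)
  show "0 \<in> hub_vertices n" "sym (hub_edges n)"
    using simple_graph_hub unfolding simple_graph_def hub_vertices_def by auto
  fix v
  assume "v \<in> hub_vertices n"
  then have "v = 0 \<or> v = 1 \<or> (v, 0) \<in> hub_edges n"
    unfolding hub_vertices_def hub_edges_def hub_adj_def spoke_def core_def by auto
  moreover have "(1, 2) \<in> hub_edges n" "(2, 0) \<in> hub_edges n"
    using assms unfolding hub_edges_def hub_adj_def spoke_def by auto
  ultimately show "(v, 0) \<in> (hub_edges n)\<^sup>*"
    by (meson converse_rtrancl_into_rtrancl r_into_rtrancl rtrancl.rtrancl_refl)
qed

text \<open>
  The extra vertex \<open>2 + 3n\<close> is the common prey of hub 0 and the core; spoke \<open>y\<close> shares the core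
  prey \<open>y + n\<close> with hub 0 and \<open>y + 2n\<close> with hub 1.
\<close>

definition hub_competition_arcs :: "nat \<Rightarrow> (nat \<times> nat) set" where
  "hub_competition_arcs n = {(u, w).
     (2 + n \<le> w \<and> w < 2 + 2 * n \<and> (u = 0 \<or> u + n = w)) \<or>
     (2 + 2 * n \<le> w \<and> w < 2 + 3 * n \<and> (u = 1 \<or> u + 2 * n = w)) \<or>
     (w = 2 + 3 * n \<and> (u = 0 \<or> core n u))}"

lemma acyclic_digraph_hub_competition_arcs:
  "acyclic_digraph (hub_vertices n \<union> {2 + 3 * n}) (hub_competition_arcs n)"
  unfolding acyclic_digraph_def
proof (intro conjI)
  show "finite (hub_vertices n \<union> {2 + 3 * n})"
    unfolding hub_vertices_def by auto
  show "hub_competition_arcs n \<subseteq> (hub_vertices n \<union> {2 + 3 * n}) \<times> (hub_vertices n \<union> {2 + 3 * n})"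
    unfolding hub_competition_arcs_def hub_vertices_def core_def by auto
  show "acyclic (hub_competition_arcs n)"
    by (rule acyclic_if_rank_increasing[where f = id]) (auto simp: hub_competition_arcs_def core_def)
qed

lemma hub_adj_if_common_competition_prey:
  assumes "(u, w) \<in> hub_competition_arcs n" "(v, w) \<in> hub_competition_arcs n" "u \<noteq> v"
  shows "hub_adj n u v"
proof -
  have uw: "(2 + n \<le> w \<and> w < 2 + 2 * n \<and> (u = 0 \<or> u + n = w)) \<or>
      (2 + 2 * n \<le> w \<and> w < 2 + 3 * n \<and> (u = 1 \<or> u + 2 * n = w)) \<or> (w = 2 + 3 * n \<and> (u = 0 \<or> core n u))"
   and vw: "(2 + n \<le> w \<and> w < 2 + 2 * n \<and> (v = 0 \<or> v + n = w)) \<or>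
      (2 + 2 * n \<le> w \<and> w < 2 + 3 * n \<and> (v = 1 \<or> v + 2 * n = w)) \<or> (w = 2 + 3 * n \<and> (v = 0 \<or> core n v))"
    using assms(1,2) unfolding hub_competition_arcs_def by auto
  consider (zero) "2 + n \<le> w" "w < 2 + 2 * n" | (one) "2 + 2 * n \<le> w" "w < 2 + 3 * n"
    | (extra) "w = 2 + 3 * n"
    using uw by linarith
  then show ?thesis
  proof cases
    case zero
    then have "u = 0 \<or> u + n = w" "v = 0 \<or> v + n = w"
      using uw vw by linarith+
    then show ?thesis
      using zero assms(3) unfolding hub_adj_def spoke_def by auto
  next
    case one
    then have "u = 1 \<or> u + 2 * n = w" "v = 1 \<or> v + 2 * n = w"
      using uw vw by linarith+
    then show ?thesis
      using one assms(3) unfolding hub_adj_def spoke_def by auto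
  next
    case extra
    then have "u = 0 \<or> core n u" "v = 0 \<or> core n v"
      using uw vw by (auto simp: core_def)
    then show ?thesis
      using assms(3) unfolding hub_adj_def by auto
  qed
qed

lemma common_competition_prey_if_hub_adj:
  assumes "hub_adj n u v"
  shows "\<exists>w. (u, w) \<in> hub_competition_arcs n \<and> (v, w) \<in> hub_competition_arcs n"
proof -
  consider "u = 0" "spoke n v" | "u = 1" "spoke n v" | "v = 0" "spoke n u" | "v = 1" "spoke n u"
    | "core n v" "u = 0 \<or> core n u" | "core n u" "v = 0"
    using assms unfolding hub_adj_def by force
  then show ?thesis
  proof cases
    case 1 then show ?thesis by (intro exI[of _ "v + n"]) (auto simp: hub_competition_arcs_def spoke_def)
  next
    case 2 then show ?thesis by (intro exI[of _ "v + 2 * n"]) (auto simp: hub_competition_arcs_def spoke_def)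
  next
    case 3 then show ?thesis by (intro exI[of _ "u + n"]) (auto simp: hub_competition_arcs_def spoke_def)
  next
    case 4 then show ?thesis by (intro exI[of _ "u + 2 * n"]) (auto simp: hub_competition_arcs_def spoke_def)
  next
    case 5 then show ?thesis by (intro exI[of _ "2 + 3 * n"]) (auto simp: hub_competition_arcs_def)
  next
    case 6 then show ?thesis by (intro exI[of _ "2 + 3 * n"]) (auto simp: hub_competition_arcs_def)
  qed
qed

lemma competition_edges_hub_competition_arcs:
  "competition_edges (hub_vertices n \<union> {2 + 3 * n}) (hub_competition_arcs n) = hub_edges n"
  using hub_adj_if_common_competition_prey common_competition_prey_if_hub_adj hub_adj_vertices
  unfolding competition_edges_def hub_edges_def by blast

lemma competition_number_hub:
  assumes "1 \<le> n"
  shows "competition_number (hub_vertices n) (hub_edges n) = 1"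
proof -
  have witness: "finite {2 + 3 * n}" "{2 + 3 * n} \<inter> hub_vertices n = {}"
    unfolding hub_vertices_def by auto
  have "\<exists>u. (v, u) \<in> hub_edges n" if "v \<in> hub_vertices n" for v
    using that assms unfolding hub_vertices_def hub_edges_def hub_adj_def spoke_def core_def
    by (cases "v \<le> 1") (auto intro: exI[of _ 2] exI[of _ 0])
  then have "0 < competition_number (hub_vertices n) (hub_edges n)"
    using competition_number_pos[OF witness acyclic_digraph_hub_competition_arcs
        competition_edges_hub_competition_arcs]
    unfolding hub_vertices_def by auto
  moreover have "competition_number (hub_vertices n) (hub_edges n) \<le> 1"
    using competition_number_le[OF witness acyclic_digraph_hub_competition_arcs
        competition_edges_hub_competition_arcs] by simp
  ultimately show ?thesis
    by linarith
qed

text \<open>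
  Hub 0 preys on spokes \<open>3, \<dots>, n + 1\<close> and spoke 2 on both hubs; the core vertex \<open>1 + 3n\<close> is the
  common prey of hub 0 and the rest of the core; the \<open>n - 1\<close> new vertices \<open>y + 3n\<close> are the common
  prey of hub 1 and spoke \<open>y \<ge> 3\<close>.
\<close>

definition hub_phylogeny_arcs :: "nat \<Rightarrow> (nat \<times> nat) set" where
  "hub_phylogeny_arcs n = {(u, w).
     (u = 2 \<and> w \<le> 1) \<or> (u = 0 \<and> 3 \<le> w \<and> w < 2 + n) \<or>
     (w = 1 + 3 * n \<and> (u = 0 \<or> (core n u \<and> u \<noteq> 1 + 3 * n))) \<or>
     (3 + 3 * n \<le> w \<and> w < 2 + 4 * n \<and> (u = 1 \<or> u + 3 * n = w))}"

definition hub_phylogeny_vertices :: "nat \<Rightarrow> nat set" where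
  "hub_phylogeny_vertices n = hub_vertices n \<union> {3 + 3 * n..<2 + 4 * n}"

lemma phylogeny_adj_if_hub_adj:
  assumes "1 \<le> n" and "hub_adj n u v"
  shows "(u, v) \<in> hub_phylogeny_arcs n \<or> (v, u) \<in> hub_phylogeny_arcs n \<or>
    (\<exists>w. (u, w) \<in> hub_phylogeny_arcs n \<and> (v, w) \<in> hub_phylogeny_arcs n)"
    (is "?P u v")
proof -
  have hub_spoke: "?P u v" if "u \<le> 1" "spoke n v" for u v
  proof (cases "v = 2 \<or> u = 0")
    case True
    then show ?thesis
      using that unfolding hub_phylogeny_arcs_def spoke_def by auto
  next
    case False
    then have "(u, v + 3 * n) \<in> hub_phylogeny_arcs n" "(v, v + 3 * n) \<in> hub_phylogeny_arcs n"
      using that unfolding hub_phylogeny_arcs_def spoke_def by auto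
    then show ?thesis
      by blast
  qed
  have in_core: "?P u v" if "u = 0 \<or> core n u" "core n v" "u \<noteq> v" for u v
  proof (cases "u = 1 + 3 * n \<or> v = 1 + 3 * n")
    case True
    then show ?thesis
      using that unfolding hub_phylogeny_arcs_def core_def by auto
  next
    case False
    then have "(u, 1 + 3 * n) \<in> hub_phylogeny_arcs n" "(v, 1 + 3 * n) \<in> hub_phylogeny_arcs n"
      using that unfolding hub_phylogeny_arcs_def by auto
    then show ?thesis
      by blast
  qed
  consider "u \<le> 1 \<and> spoke n v \<or> (u = 0 \<or> core n u) \<and> core n v \<and> u \<noteq> v"
    | "v \<le> 1 \<and> spoke n u \<or> (v = 0 \<or> core n v) \<and> core n u \<and> v \<noteq> u"
    using assms(2) unfolding hub_adj_def core_def by auto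
  then show ?thesis
    using hub_spoke in_core by cases blast+
qed

lemma hub_adj_if_phylogeny_arc:
  assumes "1 \<le> n" "(u, v) \<in> hub_phylogeny_arcs n" "u \<in> hub_vertices n" "v \<in> hub_vertices n" "u \<noteq> v"
  shows "hub_adj n u v"
  using assms unfolding hub_phylogeny_arcs_def hub_adj_def spoke_def core_def hub_vertices_def by auto

lemma hub_adj_if_common_phylogeny_prey:
  assumes "1 \<le> n" "(u, w) \<in> hub_phylogeny_arcs n" "(v, w) \<in> hub_phylogeny_arcs n" "u \<noteq> v"
  shows "hub_adj n u v"
proof -
  have uw: "(u = 2 \<and> w \<le> 1) \<or> (u = 0 \<and> 3 \<le> w \<and> w < 2 + n) \<or>
      (w = 1 + 3 * n \<and> (u = 0 \<or> (core n u \<and> u \<noteq> 1 + 3 * n))) \<or>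
      (3 + 3 * n \<le> w \<and> w < 2 + 4 * n \<and> (u = 1 \<or> u + 3 * n = w))"
   and vw: "(v = 2 \<and> w \<le> 1) \<or> (v = 0 \<and> 3 \<le> w \<and> w < 2 + n) \<or>
      (w = 1 + 3 * n \<and> (v = 0 \<or> (core n v \<and> v \<noteq> 1 + 3 * n))) \<or>
      (3 + 3 * n \<le> w \<and> w < 2 + 4 * n \<and> (v = 1 \<or> v + 3 * n = w))"
    using assms(2,3) unfolding hub_phylogeny_arcs_def by auto
  consider (hubs) "w \<le> 1" | (spokes) "3 \<le> w" "w < 2 + n" | (core) "w = 1 + 3 * n"
    | (new) "3 + 3 * n \<le> w" "w < 2 + 4 * n"
    using uw by linarith
  then show ?thesis
  proof cases
    case hubs
    then have "u = 2" "v = 2"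
      using uw vw assms(1) by linarith+
    then show ?thesis
      using assms(4) by simp
  next
    case spokes
    then have "u = 0" "v = 0"
      using uw vw assms(1) by linarith+
    then show ?thesis
      using assms(4) by simp
  next
    case core
    then have "u = 0 \<or> core n u" "v = 0 \<or> core n v"
      using uw vw assms(1) by (auto simp: core_def)
    then show ?thesis
      using assms(4) unfolding hub_adj_def by auto
  next
    case new
    then have "u = 1 \<or> u + 3 * n = w" "v = 1 \<or> v + 3 * n = w"
      using uw vw assms(1) by linarith+
    then show ?thesis
      using new assms(4) unfolding hub_adj_def spoke_def by auto
  qed
qed

lemma phylogeny_edges_hub_phylogeny_arcs:
  assumes "1 \<le> n" "u \<in> hub_vertices n" "v \<in> hub_vertices n"
  shows "(u, v) \<in> phylogeny_edges (hub_phylogeny_vertices n) (hub_phylogeny_arcs n) \<longleftrightarrow> hub_adj n u v"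
proof
  assume "(u, v) \<in> phylogeny_edges (hub_phylogeny_vertices n) (hub_phylogeny_arcs n)"
  then have "u \<noteq> v" and
    "(u, v) \<in> hub_phylogeny_arcs n \<or> (v, u) \<in> hub_phylogeny_arcs n \<or>
      (\<exists>w. (u, w) \<in> hub_phylogeny_arcs n \<and> (v, w) \<in> hub_phylogeny_arcs n)"
    unfolding phylogeny_edges_def by auto
  then show "hub_adj n u v"
    using hub_adj_if_phylogeny_arc[OF assms(1)] hub_adj_if_common_phylogeny_prey[OF assms(1)]
      hub_adj_sym assms(2,3) by blast
next
  assume "hub_adj n u v"
  then show "(u, v) \<in> phylogeny_edges (hub_phylogeny_vertices n) (hub_phylogeny_arcs n)"
    using phylogeny_adj_if_hub_adj[OF assms(1)] hub_adj_vertices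
    unfolding phylogeny_edges_def hub_phylogeny_vertices_def by blast
qed

lemma phylogeny_digraph_hub_phylogeny_arcs:
  assumes "1 \<le> n"
  shows "phylogeny_digraph (hub_vertices n) (hub_edges n) (hub_phylogeny_vertices n) (hub_phylogeny_arcs n)"
  unfolding phylogeny_digraph_def
proof (intro conjI ballI)
  show "acyclic_digraph (hub_phylogeny_vertices n) (hub_phylogeny_arcs n)"
    unfolding acyclic_digraph_def
  proof (intro conjI)
    show "finite (hub_phylogeny_vertices n)"
      unfolding hub_phylogeny_vertices_def hub_vertices_def by auto
    show "hub_phylogeny_arcs n \<subseteq> hub_phylogeny_vertices n \<times> hub_phylogeny_vertices n"
      using assms unfolding hub_phylogeny_arcs_def hub_phylogeny_vertices_def hub_vertices_def core_def
      by auto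
    show "acyclic (hub_phylogeny_arcs n)"
    proof (rule acyclic_if_rank_increasing[where f = "\<lambda>u. if u = 2 then 0 else u + 1"])
      fix u w
      assume "(u, w) \<in> hub_phylogeny_arcs n"
      then consider "u = 2" "w \<le> 1" | "w \<noteq> 2" "u < w"
        using assms unfolding hub_phylogeny_arcs_def core_def by auto
      then show "(if u = 2 then 0 else u + 1) < (if w = 2 then 0 else w + 1)"
        by cases auto
    qed
  qed
  show "hub_vertices n \<subseteq> hub_phylogeny_vertices n"
    unfolding hub_phylogeny_vertices_def by blast
  fix u v
  assume uv: "u \<in> hub_vertices n" "v \<in> hub_vertices n"
  then show "(u, v) \<in> hub_edges n \<longleftrightarrow> (u, v) \<in> phylogeny_edges (hub_phylogeny_vertices n) (hub_phylogeny_arcs n)"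
    using phylogeny_edges_hub_phylogeny_arcs[OF assms] unfolding hub_edges_def by simp
next
  fix x y
  assume "x \<in> hub_phylogeny_vertices n - hub_vertices n" "y \<in> hub_vertices n"
  then show "(x, y) \<notin> hub_phylogeny_arcs n"
    unfolding hub_phylogeny_vertices_def hub_vertices_def hub_phylogeny_arcs_def core_def by auto
qed

definition hub_spoke_edges :: "nat \<Rightarrow> nat set set" where
  "hub_spoke_edges n = (\<lambda>(h, y). {h, y}) ` ({0, 1} \<times> Collect (spoke n))"

lemma Collect_spoke: "Collect (spoke n) = {2..<2 + n}"
  unfolding spoke_def by auto

lemma card_hub_spoke_edges: "card (hub_spoke_edges n) = 2 * n"
  unfolding hub_spoke_edges_def
  by (subst card_doubletons) (auto simp: Collect_spoke)

lemma card_Union_hub_spoke_edges: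
  assumes "1 \<le> n"
  shows "card (\<Union>(hub_spoke_edges n)) = n + 2"
proof -
  have "\<Union>(hub_spoke_edges n) = {0, 1} \<union> {2..<2 + n}"
    unfolding hub_spoke_edges_def Collect_spoke using assms by (subst Union_doubletons) auto
  then show ?thesis
    by (simp add: card_Un_disjoint)
qed

lemma hub_spoke_edge_maximal_clique:
  assumes "e \<in> hub_spoke_edges n" "clique (hub_vertices n) (hub_edges n) K" "e \<subseteq> K"
  shows "K = e"
proof (rule ccontr)
  obtain h y where e: "e = {h, y}" "h \<in> {0, 1}" "spoke n y"
    using assms(1) unfolding hub_spoke_edges_def by (auto elim: doubletonsE)
  assume "K \<noteq> e"
  then obtain c where "c \<in> K" "c \<noteq> h" "c \<noteq> y"
    using assms(3) e(1) by blast
  then have "hub_adj n c h" "hub_adj n c y"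
    using assms(2,3) e(1) unfolding clique_def hub_edges_def by auto
  moreover from \<open>hub_adj n c y\<close> have "c \<le> 1"
    using e(3) unfolding hub_adj_def spoke_def core_def by auto
  ultimately show False
    using e(2) unfolding hub_adj_def spoke_def core_def by auto
qed

lemma phylogeny_number_hub:
  assumes "1 \<le> n"
  shows "phylogeny_number (hub_vertices n) (hub_edges n) = n - 1"
proof -
  note D = phylogeny_digraph_hub_phylogeny_arcs[OF assms]
  have "hub_phylogeny_vertices n - hub_vertices n = {3 + 3 * n..<2 + 4 * n}"
    unfolding hub_phylogeny_vertices_def hub_vertices_def by auto
  then have "phylogeny_number (hub_vertices n) (hub_edges n) \<le> n - 1"
    using phylogeny_number_le[OF D] by simp
  moreover have "2 * n < n + 2 + phylogeny_number (hub_vertices n) (hub_edges n)"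
  proof -
    have nonempty: "hub_spoke_edges n \<noteq> {}"
      using card_hub_spoke_edges[of n] assms by auto
    have edges: "\<exists>u v. e = {u, v} \<and> u \<in> hub_vertices n \<and> v \<in> hub_vertices n \<and> (u, v) \<in> hub_edges n"
      if e: "e \<in> hub_spoke_edges n" for e
    proof -
      obtain h y where hy: "e = {h, y}" "h \<in> {0, 1}" "y \<in> Collect (spoke n)"
        using e unfolding hub_spoke_edges_def by (rule doubletonsE)
      then have "hub_adj n h y"
        unfolding hub_adj_def by auto
      then show ?thesis
        using hy(1) hub_adj_vertices unfolding hub_edges_def by blast
    qed
    from phylogeny_number_lower_bound[OF D nonempty edges hub_spoke_edge_maximal_clique]
    show ?thesis
      by (simp add: card_hub_spoke_edges card_Union_hub_spoke_edges[OF assms])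
  qed
  ultimately show ?thesis
    by linarith
qed

theorem mainTheorem11:
  fixes l :: nat
  shows "\<exists>(V :: nat set) E. simple_graph V E \<and> connected_graph V E \<and>
           int (phylogeny_number V E) - int (competition_number V E) + 1 = int l"
proof -
  have "1 \<le> l + 1"
    by simp
  then show ?thesis
    using simple_graph_hub connected_graph_hub phylogeny_number_hub competition_number_hub
    by (intro exI[of _ "hub_vertices (l + 1)"] exI[of _ "hub_edges (l + 1)"]) auto
qed

end
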